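(* Let $A$ satisfy the spectral assumption, $B\in\mathbb{R}^{n\times k}$, and suppose $E_{\mathrm u}^\perp$ and $E_{\mathrm s}$ are $\xi$-close with $\xi\in(0,1)$. Let $\gamma>0$, $\gamma_+>1$, and let $x\in\mathbb{R}^n$ satisfy $\|R_1x\|/\|R_2x\|>\gamma_+$. Let $u\in\mathbb{R}^k$ with $\|u\|\le\alpha\|x\|$, where $$\alpha<\frac{\frac{\gamma_+}{\gamma_++1}\sigma_{\min}(M_1)-\frac{\gamma}{\gamma_+-1}\frac{1}{1-\xi}\|A\|}{\big(1+\frac{\sqrt{2\xi}}{1-\xi}+\frac{\gamma}{1-\xi}\big)\|B\|}.$$ Then $x'=Ax+Bu$ satisfies $\|R_1x'\|/\|R_2x'\|>\gamma$.
   Context: Spectral assumption: $A\in\mathbb{R}^{n\times n}$ diagonalizable with eigenvalues $|\lambda_1|>\cdots\ge|\lambda_k|>1>|\lambda_{k+1}|\ge\cdots\ge|\lambda_n|$. $E_{\mathrm u}$ / $E_{\mathrm s}$: real invariant subspaces associated with $\lambda_1..\lambda_k$ / $\lambda_{k+1}..\lambda_n$. $P_1=Q_1$ has orthonormal columns spanning $E_{\mathrm u}$, $P_2$ orthonormal columns spanning $E_{\mathrm u}^\perp$, $Q_2$ orthonormal columns spanning $E_{\mathrm s}$; $M_1=P_1^\top AP_1$; $Q=[Q_1\ Q_2]$, $Q^{-1}=\begin{bmatrix}R_1\\R_2\end{bmatrix}$. $\xi$-close: $\sigma_{\min}(P_2^\top Q_2)>1-\xi$. $\sigma_{\min}$ is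 the smallest singular value, $\|\cdot\|$ the spectral/Euclidean norm. *)

theory Defs
  imports "HOL-Analysis.Analysis"
begin

definition cmat :: "real^'n^'m \<Rightarrow> complex^'n^'m" where
  "cmat M = map_matrix complex_of_real M"

definition cvec :: "real^'n \<Rightarrow> complex^'n" where
  "cvec x = (\<chi> i. complex_of_real (x $ i))"

definition cdiag :: "('n::finite \<Rightarrow> complex) \<Rightarrow> complex^'n^'n" where
  "cdiag lam = (\<chi> i j. if i = j then lam i else 0)"

definition spectral_assumption ::
  "real^'n^'n \<Rightarrow> complex^'n^'n \<Rightarrow> ('n::finite \<Rightarrow> complex) \<Rightarrow> bool" where
  "spectral_assumption A S lam \<longleftrightarrow>
     invertible S \<and> cmat A ** S = S ** cdiag lam \<and> (\<forall>i. cmod (lam i) \<noteq> 1)"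

text \<open>Real invariant subspace associated with the eigenvalues of modulus > 1
  (resp. < 1): the real vectors lying in the complex span of the corresponding
  eigenvectors (columns of S).\<close>
definition E_u :: "complex^'n^'n \<Rightarrow> ('n::finite \<Rightarrow> complex) \<Rightarrow> (real^'n) set" where
  "E_u S lam = {x. \<exists>c :: complex^'n. (\<forall>i. cmod (lam i) \<le> 1 \<longrightarrow> c $ i = 0) \<and> cvec x = S *v c}"

definition E_s :: "complex^'n^'n \<Rightarrow> ('n::finite \<Rightarrow> complex) \<Rightarrow> (real^'n) set" where
  "E_s S lam = {x. \<exists>c :: complex^'n. (\<forall>i. cmod (lam i) \<ge> 1 \<longrightarrow> c $ i = 0) \<and> cvec x = S *v c}"

definition orthonormal_basis_matrix :: "real^'k^'n \<Rightarrow> (real^'n) set \<Rightarrow> bool" where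
  "orthonormal_basis_matrix P V \<longleftrightarrow> transpose P ** P = mat 1 \<and> range ((*v) P) = V"

definition sigma_min :: "real^'k^'k \<Rightarrow> real" where
  "sigma_min M = sqrt (Min {l. \<exists>v. v \<noteq> 0 \<and> (transpose M ** M) *v v = l *\<^sub>R v})"

definition opnorm :: "real^'k^'n \<Rightarrow> real" where
  "opnorm M = onorm ((*v) M)"

definition block_cols :: "real^'k^'n \<Rightarrow> real^'m^'n \<Rightarrow> real^('k + 'm)^'n" where
  "block_cols Q1 Q2 = (\<chi> i j. case j of Inl a \<Rightarrow> Q1 $ i $ a | Inr b \<Rightarrow> Q2 $ i $ b)"

text \<open>Row blocks R1, R2 of Q^{-1}.\<close>
definition R1 :: "real^'n::finite^('k::finite + 'm::finite) \<Rightarrow> real^'n^'k" where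
  "R1 R = (\<chi> a. R $ Inl a)"

definition R2 :: "real^'n::finite^('k::finite + 'm::finite) \<Rightarrow> real^'n^'m" where
  "R2 R = (\<chi> b. R $ Inr b)"

end

theory Submission
  imports Defs
begin

text \<open>Write \<open>r\<^sub>1 = R\<^sub>1 x\<close>, \<open>r\<^sub>2 = R\<^sub>2 x\<close>, so that \<open>x = P\<^sub>1 r\<^sub>1 + Q\<^sub>2 r\<^sub>2\<close>. Since \<open>E\<^sub>u\<close> and \<open>E\<^sub>s\<close> are
  \<open>A\<close>-invariant, \<open>R\<^sub>1 (A x) = M\<^sub>1 r\<^sub>1\<close> and \<open>R\<^sub>2 (A x) = R\<^sub>2 (A Q\<^sub>2 r\<^sub>2)\<close>. Closeness of \<open>E\<^sub>u\<^sup>\<bottom>\<close> and \<open>E\<^sub>s\<close>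
  bounds the coordinate maps: projecting \<open>y = P\<^sub>1 r\<^sub>1 + Q\<^sub>2 r\<^sub>2\<close> onto \<open>E\<^sub>u\<^sup>\<bottom>\<close> kills the first summand,
  so \<open>(1 - \<xi>) \<parallel>R\<^sub>2 y\<parallel> \<le> \<parallel>y\<parallel>\<close>; and \<open>Q\<^sub>2\<close> has a component of norm at most \<open>\<surd>(2\<xi>)\<close> in \<open>E\<^sub>u\<close>,
  giving \<open>\<parallel>R\<^sub>1 y\<parallel> \<le> (1 + \<surd>(2\<xi>)/(1 - \<xi>)) \<parallel>y\<parallel>\<close>. Hence \<open>\<parallel>R\<^sub>1 x'\<parallel>\<close> is at least
  \<open>\<sigma>\<^sub>m\<^sub>i\<^sub>n(M\<^sub>1) \<parallel>r\<^sub>1\<parallel>\<close> minus the input term, \<open>\<parallel>R\<^sub>2 x'\<parallel>\<close> is at most \<open>(\<parallel>A\<parallel> \<parallel>r\<^sub>2\<parallel> + \<parallel>B u\<parallel>)/(1 - \<xi>)\<close>,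
  and the cone condition \<open>\<parallel>r\<^sub>1\<parallel> > \<gamma>\<^sub>+ \<parallel>r\<^sub>2\<parallel>\<close> compares both \<open>\<parallel>r\<^sub>1\<parallel>\<close> and \<open>\<parallel>r\<^sub>2\<parallel>\<close> with \<open>\<parallel>x\<parallel>\<close>;
  the bound on \<open>\<alpha>\<close> is exactly what makes the resulting lower bound positive.\<close>

lemma quadratic_nonneg_imp_linear_coeff_zero:
  fixes a b :: real
  assumes "\<And>t. 0 \<le> a * t + b * t\<^sup>2"
  shows "a = 0"
proof (rule ccontr)
  assume "a \<noteq> 0"
  define c where "c = \<bar>b\<bar> + 1"
  have c: "c > 0" and abs_b: "\<bar>b\<bar> = c - 1" unfolding c_def by simp_all
  have "a * (- a / c) + b * (- a / c)\<^sup>2 \<le> a * (- a / c) + \<bar>b\<bar> * (- a / c)\<^sup>2"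
    by (simp add: mult_right_mono)
  also have "\<dots> = - (a / c)\<^sup>2"
    using c by (simp add: abs_b field_simps power2_eq_square)
  also have "\<dots> < 0"
    using \<open>a \<noteq> 0\<close> c by simp
  finally show False using assms[of "- a / c"] by simp
qed

lemma gram_matrix_inner:
  fixes M :: "real^'k^'n"
  shows "((transpose M ** M) *v v) \<bullet> w = (M *v v) \<bullet> (M *v w)"
  by (simp add: matrix_vector_mul_assoc[symmetric] dot_lmul_matrix)

lemma symmetric_matrix_inner_commute:
  fixes K :: "real^'n^'n"
  assumes "transpose K = K"
  shows "(K *v v) \<bullet> w = v \<bullet> (K *v w)"
  using transpose_matrix_vector[of K v, unfolded assms] dot_lmul_matrix[of v K w] by simp

lemma symmetric_matrix_eigenvalues_finite:
  fixes K :: "real^'n^'n"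
  assumes "transpose K = K"
  shows "finite {l. \<exists>v. v \<noteq> 0 \<and> K *v v = l *\<^sub>R v}" (is "finite ?E")
proof -
  define f where "f l = (SOME v. v \<noteq> 0 \<and> K *v v = l *\<^sub>R v)" for l
  have f: "f l \<noteq> 0 \<and> K *v f l = l *\<^sub>R f l" if "l \<in> ?E" for l
    using someI_ex[OF that[unfolded mem_Collect_eq]] unfolding f_def .
  have inj: "inj_on f ?E"
  proof (rule inj_onI)
    fix l l' assume l: "l \<in> ?E" and l': "l' \<in> ?E" and eq: "f l = f l'"
    have "l *\<^sub>R f l = K *v f l'" using f[OF l] eq by simp
    also have "\<dots> = l' *\<^sub>R f l" using f[OF l'] eq by simp
    finally show "l = l'" using f[OF l] by (simp add: scaleR_cancel_right)
  qed
  have "pairwise orthogonal (f ` ?E)"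
  proof (rule pairwise_imageI)
    fix l l' assume l: "l \<in> ?E" and l': "l' \<in> ?E" and "l \<noteq> l'"
    have "l * (f l \<bullet> f l') = (K *v f l) \<bullet> f l'" using f[OF l] by simp
    also have "\<dots> = f l \<bullet> (K *v f l')" by (rule symmetric_matrix_inner_commute[OF assms])
    also have "\<dots> = l' * (f l \<bullet> f l')" using f[OF l'] by simp
    finally show "orthogonal (f l) (f l')" unfolding orthogonal_def using \<open>l \<noteq> l'\<close> by simp
  qed
  moreover have "0 \<notin> f ` ?E"
  proof
    assume "0 \<in> f ` ?E"
    then obtain l where "l \<in> ?E" and "f l = 0" by (rule imageE) simp
    then show False using f by simp
  qed
  ultimately have "finite (f ` ?E)"
    by (intro finiteI_independent pairwise_orthogonal_independent)
  then show ?thesis using finite_imageD[OF _ inj] by blast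
qed

lemma gram_matrix_eigenvalue_nonneg:
  fixes M :: "real^'k^'n"
  assumes "v \<noteq> 0" and "(transpose M ** M) *v v = l *\<^sub>R v"
  shows "l \<ge> 0"
proof -
  have "0 \<le> l * (v \<bullet> v)"
    using gram_matrix_inner[of M v v] assms(2) by simp
  moreover have "v \<bullet> v > 0" using assms(1) by simp
  ultimately show ?thesis by (simp add: zero_le_mult_iff)
qed

text \<open>The minimiser \<open>v\<close> of \<open>\<parallel>M z\<parallel>\<^sup>2\<close> on the unit sphere is a critical point of the Rayleigh quotient;
  along the direction \<open>w = M\<^sup>T M v - m v\<close> this forces \<open>w = 0\<close>.\<close>
lemma gram_matrix_min_rayleigh_eigenvalue:
  fixes M :: "real^'k^'n"
  obtains m v where "v \<noteq> 0" "(transpose M ** M) *v v = m *\<^sub>R v"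
    and "\<And>z. m * (norm z)\<^sup>2 \<le> (norm (M *v z))\<^sup>2"
proof -
  define g where "g z = (norm (M *v z))\<^sup>2" for z
  have "continuous_on (sphere 0 1) g" unfolding g_def by (intro continuous_intros)
  moreover have "sphere (0::real^'k) 1 \<noteq> {}"
    by (metis norm_axis_1 mem_sphere_0 empty_iff)
  ultimately obtain v where v: "norm v = 1" and v_min: "\<And>y. norm y = 1 \<Longrightarrow> g v \<le> g y"
    using continuous_attains_inf[OF compact_sphere] by (metis mem_sphere_0)
  define m where "m = g v"
  have m_le: "m * (norm z)\<^sup>2 \<le> (norm (M *v z))\<^sup>2" for z
  proof (cases "z = 0")
    case False
    then have "m \<le> g (z /\<^sub>R norm z)" unfolding m_def by (intro v_min) simp
    also have "\<dots> = (norm (M *v z))\<^sup>2 / (norm z)\<^sup>2"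
      by (simp add: g_def matrix_vector_mult_scaleR power_divide field_simps)
    finally show ?thesis using False by (simp add: pos_le_divide_eq)
  qed simp
  define w where "w = (transpose M ** M) *v v - m *\<^sub>R v"
  have expand: "(norm (p + t *\<^sub>R q))\<^sup>2 = (norm p)\<^sup>2 + 2 * t * (p \<bullet> q) + t\<^sup>2 * (norm q)\<^sup>2"
    for p q :: "'a::real_inner" and t
    unfolding power2_norm_eq_inner
    by (simp add: inner_add_left inner_add_right inner_commute algebra_simps power2_eq_square)
  have "(M *v v) \<bullet> (M *v w) = w \<bullet> w + m * (v \<bullet> w)"
    using gram_matrix_inner[of M v w] by (simp add: w_def inner_diff_left)
  then have "(norm (M *v (v + t *\<^sub>R w)))\<^sup>2
      = m + 2 * t * (w \<bullet> w + m * (v \<bullet> w)) + t\<^sup>2 * (norm (M *v w))\<^sup>2" for t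
    using expand[of "M *v v" t "M *v w"]
    by (simp add: m_def g_def matrix_vector_right_distrib matrix_vector_mult_scaleR)
  moreover have "(norm (v + t *\<^sub>R w))\<^sup>2 = 1 + 2 * t * (v \<bullet> w) + t\<^sup>2 * (norm w)\<^sup>2" for t
    using expand[of v t w] v by simp
  ultimately have "0 \<le> 2 * (w \<bullet> w) * t + ((norm (M *v w))\<^sup>2 - m * (norm w)\<^sup>2) * t\<^sup>2" for t
    using m_le[of "v + t *\<^sub>R w"] by (simp add: algebra_simps)
  then have "2 * (w \<bullet> w) = 0" by (rule quadratic_nonneg_imp_linear_coeff_zero)
  then have "(transpose M ** M) *v v = m *\<^sub>R v" by (simp add: w_def)
  moreover have "v \<noteq> 0" using v by auto
  ultimately show ?thesis using m_le that by blast
qed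

lemma
  fixes M :: "real^'k^'k"
  shows sigma_min_nonneg: "sigma_min M \<ge> 0"
    and sigma_min_mult_norm_le: "sigma_min M * norm v \<le> norm (M *v v)"
proof -
  define E where "E = {l. \<exists>v. v \<noteq> 0 \<and> (transpose M ** M) *v v = l *\<^sub>R v}"
  obtain m where "m \<in> E" and m: "\<And>z. m * (norm z)\<^sup>2 \<le> (norm (M *v z))\<^sup>2"
    using gram_matrix_min_rayleigh_eigenvalue[of M] unfolding E_def by blast
  \<comment> \<open>\<open>Min\<close> is unspecified on infinite sets\<close>
  have "finite E"
    unfolding E_def by (rule symmetric_matrix_eigenvalues_finite) (simp add: matrix_transpose_mul)
  then have "Min E \<le> m" and "Min E \<in> E" using \<open>m \<in> E\<close> by (auto intro: Min_in)
  then have "0 \<le> Min E" using gram_matrix_eigenvalue_nonneg unfolding E_def by blast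
  then show "sigma_min M \<ge> 0" by (simp add: sigma_min_def E_def)
  have "sigma_min M * norm v = sqrt (Min E * (norm v)\<^sup>2)"
    by (simp add: sigma_min_def E_def real_sqrt_mult)
  also have "\<dots> \<le> sqrt ((norm (M *v v))\<^sup>2)"
    using mult_right_mono[OF \<open>Min E \<le> m\<close> zero_le_power2, of "norm v"] m[of v]
    by (intro real_sqrt_le_mono) linarith
  finally show "sigma_min M * norm v \<le> norm (M *v v)" by simp
qed

lemma opnorm_nonneg: "0 \<le> opnorm M"
  unfolding opnorm_def by (rule onorm_pos_le) simp

lemma norm_mult_le_opnorm: "norm (M *v x) \<le> opnorm M * norm x"
  unfolding opnorm_def by (rule onorm) simp

declare transpose_matrix_vector [simp del]

lemma inner_transpose_matrix_vector:
  fixes P :: "real^'k^'n"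
  shows "(transpose P *v y) \<bullet> c = y \<bullet> (P *v c)"
  unfolding transpose_matrix_vector by (rule dot_lmul_matrix)

lemma orthonormal_basis_matrix_transpose_mult:
  "orthonormal_basis_matrix P V \<Longrightarrow> transpose P *v (P *v c) = c"
  unfolding orthonormal_basis_matrix_def by (simp add: matrix_vector_mul_assoc)

lemma orthonormal_basis_matrix_norm:
  assumes "orthonormal_basis_matrix P V"
  shows "norm (P *v c) = norm c"
  using inner_transpose_matrix_vector[of P "P *v c" c]
  by (simp add: orthonormal_basis_matrix_transpose_mult[OF assms] norm_eq_sqrt_inner inner_commute)

lemma orthonormal_basis_matrix_transpose_norm_le:
  assumes "orthonormal_basis_matrix P V"
  shows "norm (transpose P *v y) \<le> norm y"
proof -
  have "(norm (transpose P *v y))\<^sup>2 = y \<bullet> (P *v (transpose P *v y))"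
    by (simp add: power2_norm_eq_inner inner_transpose_matrix_vector)
  also have "\<dots> \<le> norm y * norm (transpose P *v y)"
    using Cauchy_Schwarz_ineq2 orthonormal_basis_matrix_norm[OF assms] by (metis abs_le_D1)
  finally show ?thesis
    by (cases "transpose P *v y = 0") (auto simp: power2_eq_square intro: mult_right_le_imp_le)
qed

lemma orthonormal_basis_matrix_range:
  "orthonormal_basis_matrix P V \<Longrightarrow> y \<in> V \<longleftrightarrow> (\<exists>c. y = P *v c)"
  unfolding orthonormal_basis_matrix_def by auto

lemma orthonormal_basis_matrix_orthogonal_comp:
  assumes "orthonormal_basis_matrix P (orthogonal_comp V)" and "a \<in> V"
  shows "transpose P *v a = 0"
proof -
  have "P *v (transpose P *v a) \<in> orthogonal_comp V"
    using orthonormal_basis_matrix_range[OF assms(1)] by blast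
  then have "(transpose P *v a) \<bullet> (transpose P *v a) = 0"
    using assms(2) by (simp add: inner_transpose_matrix_vector orthogonal_comp_def orthogonal_def)
  then show ?thesis by simp
qed

lemma orthonormal_basis_matrix_Pythagoras:
  assumes P1: "orthonormal_basis_matrix P1 V"
    and P2: "orthonormal_basis_matrix P2 (orthogonal_comp V)"
  shows "(norm (transpose P1 *v y))\<^sup>2 + (norm (transpose P2 *v y))\<^sup>2 = (norm y)\<^sup>2"
proof -
  define a where "a = P1 *v (transpose P1 *v y)"
  have "a \<in> V" unfolding a_def using orthonormal_basis_matrix_range[OF P1] by blast
  have "transpose P1 *v (y - a) = 0"
    by (simp add: a_def matrix_vector_mult_diff_distrib orthonormal_basis_matrix_transpose_mult[OF P1])
  then have "e \<bullet> (y - a) = 0" if "e \<in> V" for e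
    using that orthonormal_basis_matrix_range[OF P1]
    by (metis inner_commute inner_transpose_matrix_vector inner_zero_left)
  then have "y - a \<in> orthogonal_comp V" by (simp add: orthogonal_comp_def orthogonal_def)
  then obtain d where d: "y - a = P2 *v d" using orthonormal_basis_matrix_range[OF P2] by blast
  have "transpose P2 *v y = transpose P2 *v a + transpose P2 *v (y - a)"
    by (simp add: matrix_vector_right_distrib[symmetric])
  also have "\<dots> = d"
    using orthonormal_basis_matrix_orthogonal_comp[OF P2 \<open>a \<in> V\<close>] d
      orthonormal_basis_matrix_transpose_mult[OF P2] by simp
  finally have "norm (transpose P2 *v y) = norm (y - a)"
    using d orthonormal_basis_matrix_norm[OF P2] by simp
  moreover have "norm (transpose P1 *v y) = norm a"
    unfolding a_def by (rule orthonormal_basis_matrix_norm[OF P1, symmetric])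
  moreover have "(norm y)\<^sup>2 = (norm a)\<^sup>2 + (norm (y - a))\<^sup>2"
    using norm_add_Pythagorean[of a "y - a"] \<open>a \<in> V\<close> \<open>y - a \<in> orthogonal_comp V\<close>
    by (simp add: orthogonal_comp_def)
  ultimately show ?thesis by simp
qed

definition vec_join :: "'a^'k \<Rightarrow> 'a^'m \<Rightarrow> 'a^('k + 'm)" where
  "vec_join a b = (\<chi> j. case j of Inl i \<Rightarrow> a $ i | Inr i \<Rightarrow> b $ i)"

lemma block_cols_mult_vec_join:
  "block_cols P Q *v vec_join a b = P *v a + Q *v b"
proof -
  have "(block_cols P Q *v vec_join a b) $ i = (P *v a + Q *v b) $ i" for i
    by (simp add: matrix_vector_mult_def UNIV_Plus_UNIV[symmetric] sum.Plus
        block_cols_def vec_join_def del: UNIV_Plus_UNIV)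
  then show ?thesis by (simp add: vec_eq_iff)
qed

lemma vec_join_R1_R2: "vec_join (R1 R *v y) (R2 R *v y) = R *v y"
  by (simp add: vec_eq_iff vec_join_def R1_def R2_def matrix_vector_mult_def split: sum.split)

lemma R1_R2_vec_join:
  assumes "R *v y = vec_join a b"
  shows "R1 R *v y = a" and "R2 R *v y = b"
  using arg_cong[OF assms, of "\<lambda>z. z $ Inl _"] arg_cong[OF assms, of "\<lambda>z. z $ Inr _"]
  by (simp_all add: vec_eq_iff vec_join_def R1_def R2_def matrix_vector_mult_def)

lemma vec_join_cases: obtains a b where "z = vec_join a b"
proof
  show "z = vec_join (\<chi> i. z $ Inl i) (\<chi> i. z $ Inr i)"
    by (simp add: vec_eq_iff vec_join_def split: sum.split)
qed

lemma vec_join_eq_0_iff: "vec_join a b = 0 \<longleftrightarrow> a = 0 \<and> b = 0"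
  by (auto simp: vec_eq_iff vec_join_def split: sum.split)

lemma matrix_inv_inverse:
  assumes "invertible M"
  shows "M ** matrix_inv M = mat 1" and "matrix_inv M ** M = mat 1"
  using someI_ex[OF assms[unfolded invertible_def]] by (simp_all add: matrix_inv_def)

lemma invertible_iff_inj_surj:
  fixes M :: "'a::field^'n^'m"
  shows "invertible M \<longleftrightarrow> inj ((*v) M) \<and> surj ((*v) M)"
proof
  assume "inj ((*v) M) \<and> surj ((*v) M)"
  then obtain B C where "B ** M = mat 1" and "M ** C = mat 1"
    using matrix_left_invertible_injective matrix_right_invertible_surjective by blast
  moreover have "B = C"
  proof -
    have "B = B ** (M ** C)" using \<open>M ** C = mat 1\<close> by simp
    also have "\<dots> = C" using \<open>B ** M = mat 1\<close> by (simp add: matrix_mul_assoc)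
    finally show ?thesis .
  qed
  ultimately show "invertible M" unfolding invertible_def by blast
next
  assume "invertible M"
  then obtain B where "M ** B = mat 1" and "B ** M = mat 1" unfolding invertible_def by blast
  then show "inj ((*v) M) \<and> surj ((*v) M)"
    using matrix_left_invertible_injective matrix_right_invertible_surjective by blast
qed

lemma block_cols_invertible:
  fixes P :: "real^'k^'n" and Q :: "real^'m^'n"
  assumes P: "orthonormal_basis_matrix P V" and Q: "orthonormal_basis_matrix Q W"
    and disjoint: "\<And>x. x \<in> V \<Longrightarrow> x \<in> W \<Longrightarrow> x = 0"
    and spanning: "\<And>y. \<exists>a\<in>V. \<exists>b\<in>W. y = a + b"
  shows "invertible (block_cols P Q)"
  unfolding invertible_iff_inj_surj
proof
  show "inj ((*v) (block_cols P Q))"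
  proof (rule vec.inj_iff_eq_0[THEN iffD2], intro allI impI)
    fix z assume z: "block_cols P Q *v z = 0"
    obtain a b where ab: "z = vec_join a b" by (rule vec_join_cases)
    have "P *v a + Q *v b = 0" using z by (simp add: ab block_cols_mult_vec_join)
    then have "P *v a = Q *v (- b)"
      by (simp only: linear_neg[OF matrix_vector_mul_linear] eq_neg_iff_add_eq_0)
    then have "P *v a \<in> W" using orthonormal_basis_matrix_range[OF Q] by blast
    moreover have "P *v a \<in> V" using orthonormal_basis_matrix_range[OF P] by blast
    ultimately have Pa: "P *v a = 0" using disjoint by blast
    then have "Q *v b = 0" using \<open>P *v a + Q *v b = 0\<close> by simp
    then have "a = 0" and "b = 0"
      using Pa orthonormal_basis_matrix_transpose_mult[OF P, of a]
        orthonormal_basis_matrix_transpose_mult[OF Q, of b] by simp_all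
    then show "z = 0" by (simp add: ab vec_join_eq_0_iff)
  qed
  show "surj ((*v) (block_cols P Q))"
  proof (unfold surj_def, intro allI)
    fix y
    obtain a b where "a \<in> V" "b \<in> W" and y: "y = a + b" using spanning by blast
    then obtain c d where "a = P *v c" and "b = Q *v d"
      using orthonormal_basis_matrix_range[OF P] orthonormal_basis_matrix_range[OF Q] by meson
    then have "y = P *v c + Q *v d" using y by simp
    then show "\<exists>z. y = block_cols P Q *v z" by (metis block_cols_mult_vec_join)
  qed
qed

lemma cvec_mult: "cvec (A *v x) = cmat A *v cvec x"
  by (simp add: vec_eq_iff cvec_def cmat_def matrix_vector_mult_def)

lemma cvec_diff: "cvec (x - y) = cvec x - cvec y"
  by (simp add: vec_eq_iff cvec_def)

lemma cvec_eq_0_iff: "cvec x = 0 \<longleftrightarrow> x = 0"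
  by (simp add: vec_eq_iff cvec_def)

definition vconj :: "complex^'n \<Rightarrow> complex^'n" where
  "vconj v = (\<chi> i. cnj (v $ i))"

lemma vconj_mult: "vconj (M *v v) = map_matrix cnj M *v vconj v"
  by (simp add: vec_eq_iff vconj_def matrix_vector_mult_def)

lemma map_matrix_cnj_mult: "map_matrix cnj (M ** N) = map_matrix cnj M ** map_matrix cnj N"
  by (simp add: vec_eq_iff matrix_matrix_mult_def)

lemma map_matrix_cnj_cmat [simp]: "map_matrix cnj (cmat A) = cmat A"
  by (simp add: vec_eq_iff cmat_def)

lemma map_matrix_cnj_cdiag: "map_matrix cnj (cdiag lam) = cdiag (\<lambda>i. cnj (lam i))"
  by (simp add: vec_eq_iff cdiag_def)

lemma vconj_cvec [simp]: "vconj (cvec x) = cvec x"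
  by (simp add: vec_eq_iff vconj_def cvec_def)

lemma vconj_eq_imp_cvec:
  assumes "vconj y = y"
  shows "y = cvec (\<chi> i. Re (y $ i))"
  using assms by (simp add: vec_eq_iff vconj_def cvec_def complex_eq_iff)

lemma cdiag_mult_vec: "cdiag lam *v c = (\<chi> i. lam i * c $ i)"
proof -
  have "(\<Sum>j\<in>UNIV. (if i = j then lam i else 0) * c $ j) = lam i * c $ i" for i
    by (simp add: if_distrib[of "\<lambda>a. a * _"] cong: if_cong)
  then show ?thesis by (simp add: vec_eq_iff matrix_vector_mult_def cdiag_def)
qed

lemma diagonal_intertwiner_entry_eq_0:
  assumes "cdiag lam ** T = T ** cdiag mu" and "lam i \<noteq> mu j"
  shows "T $ i $ j = 0"
proof -
  have "lam i * T $ i $ j = T $ i $ j * mu j"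
    using arg_cong[OF assms(1), of "\<lambda>M. M $ i $ j"]
    by (simp add: matrix_matrix_mult_def cdiag_def if_distrib[of "\<lambda>a. a * _"]
        if_distrib[of "\<lambda>a. _ * a"] cong: if_cong)
  then show ?thesis using assms(2) by (simp add: mult.commute)
qed

definition restrict_vec :: "'n set \<Rightarrow> 'a::zero^'n \<Rightarrow> 'a^'n" where
  "restrict_vec I v = (\<chi> i. if i \<in> I then v $ i else 0)"

lemma restrict_vec_idem [simp]: "restrict_vec I (restrict_vec I v) = restrict_vec I v"
  by (simp add: vec_eq_iff restrict_vec_def)

lemma diff_restrict_vec: "v - restrict_vec I v = restrict_vec (- I) (v :: 'a::ab_group_add^'n)"
  by (simp add: vec_eq_iff restrict_vec_def)

lemma vconj_restrict_vec: "vconj (restrict_vec I v) = restrict_vec I (vconj v)"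
  by (simp add: vec_eq_iff vconj_def restrict_vec_def)

lemma block_diagonal_mult_restrict_vec:
  fixes T :: "'a::comm_semiring_1^'n^'n"
  assumes "\<And>i j. (i \<in> I) \<noteq> (j \<in> I) \<Longrightarrow> T $ i $ j = 0"
  shows "T *v restrict_vec I v = restrict_vec I (T *v v)"
  unfolding vec_eq_iff restrict_vec_def matrix_vector_mult_def
  using assms by (auto intro!: sum.cong sum.neutral)

definition real_eigenspan :: "complex^'n^'n \<Rightarrow> 'n set \<Rightarrow> (real^'n) set" where
  "real_eigenspan S I = {x. \<exists>c. restrict_vec I c = c \<and> cvec x = S *v c}"

lemma E_u_eq_real_eigenspan: "E_u S lam = real_eigenspan S {i. 1 < cmod (lam i)}"
  by (auto simp: E_u_def real_eigenspan_def restrict_vec_def vec_eq_iff not_less)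

lemma E_s_eq_real_eigenspan: "E_s S lam = real_eigenspan S {i. cmod (lam i) < 1}"
  by (auto simp: E_s_def real_eigenspan_def restrict_vec_def vec_eq_iff not_less)

lemma real_eigenspan_invariant:
  assumes "cmat A ** S = S ** cdiag lam" and "x \<in> real_eigenspan S I"
  shows "A *v x \<in> real_eigenspan S I"
proof -
  obtain c where c: "restrict_vec I c = c" "cvec x = S *v c"
    using assms(2) unfolding real_eigenspan_def by blast
  have "cvec (A *v x) = S *v (cdiag lam *v c)"
    using assms(1) by (simp add: cvec_mult c matrix_vector_mul_assoc)
  moreover have "restrict_vec I (cdiag lam *v c) = cdiag lam *v c"
    using c(1) by (simp add: cdiag_mult_vec restrict_vec_def vec_eq_iff) metis
  ultimately show ?thesis unfolding real_eigenspan_def by blast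
qed

lemma real_eigenspan_disjoint:
  assumes "invertible S" and "I \<inter> J = {}"
    and "x \<in> real_eigenspan S I" and "x \<in> real_eigenspan S J"
  shows "x = 0"
proof -
  obtain c d where c: "restrict_vec I c = c" "cvec x = S *v c"
    and d: "restrict_vec J d = d" "cvec x = S *v d"
    using assms(3,4) unfolding real_eigenspan_def by blast
  have "c = d"
    using inj_matrix_vector_mult[OF assms(1)] c(2) d(2) by (auto dest: injD)
  have "c $ i = 0" for i
  proof (cases "i \<in> I")
    case True
    then have "i \<notin> J" using assms(2) by blast
    then show ?thesis
      using arg_cong[OF d(1), of "\<lambda>v. v $ i"] \<open>c = d\<close> by (simp add: restrict_vec_def)
  next
    case False
    then show ?thesis using arg_cong[OF c(1), of "\<lambda>v. v $ i"] by (simp add: restrict_vec_def)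
  qed
  then have "c = 0" by (simp add: vec_eq_iff)
  then show ?thesis using c(2) by (simp add: cvec_eq_0_iff)
qed

lemma invertible_mult_left_cancel:
  assumes "invertible S" and "S ** X = S ** Y"
  shows "X = Y"
  using arg_cong[OF assms(2), of "(**) (matrix_inv S)"]
  by (simp add: matrix_mul_assoc matrix_inv_inverse[OF assms(1)])

text \<open>For real \<open>A\<close> the conjugated eigenbasis \<open>S\<^sup>*\<close> diagonalises \<open>A\<close> too, with conjugated eigenvalues;
  the change of basis \<open>S\<^sup>-\<^sup>1 S\<^sup>*\<close> therefore only mixes eigenvalues of equal modulus.\<close>
lemma conj_eigenbasis_change_intertwines:
  assumes "invertible S" and AS: "cmat A ** S = S ** cdiag lam"
  defines "T \<equiv> matrix_inv S ** map_matrix cnj S"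
  shows "cdiag lam ** T = T ** cdiag (\<lambda>i. cnj (lam i))"
proof (rule invertible_mult_left_cancel[OF assms(1)])
  have ST: "S ** T = map_matrix cnj S"
    by (simp add: T_def matrix_mul_assoc matrix_inv_inverse[OF assms(1)])
  have "S ** (cdiag lam ** T) = cmat A ** (S ** T)"
    by (simp add: AS matrix_mul_assoc)
  also have "\<dots> = map_matrix cnj (cmat A ** S)"
    by (simp add: ST map_matrix_cnj_mult)
  also have "\<dots> = S ** (T ** cdiag (\<lambda>i. cnj (lam i)))"
    by (simp add: AS map_matrix_cnj_mult map_matrix_cnj_cdiag ST[symmetric] matrix_mul_assoc)
  finally show "S ** (cdiag lam ** T) = S ** (T ** cdiag (\<lambda>i. cnj (lam i)))" .
qed

lemma conj_eigenbasis_change_entry_eq_0: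
  assumes "invertible S" and "cmat A ** S = S ** cdiag lam" and "cmod (lam i) \<noteq> cmod (lam j)"
  shows "(matrix_inv S ** map_matrix cnj S) $ i $ j = 0"
proof -
  have "lam i \<noteq> cnj (lam j)" using assms(3) by (metis complex_mod_cnj)
  then show ?thesis
    by (rule diagonal_intertwiner_entry_eq_0[OF conj_eigenbasis_change_intertwines[OF assms(1,2)]])
qed

lemma eigencoordinates_restrict_real:
  assumes S: "invertible S" and AS: "cmat A ** S = S ** cdiag lam" and Sc: "S *v c = cvec x"
  obtains a where "cvec a = S *v restrict_vec {i. P (cmod (lam i))} c"
proof -
  let ?I = "{i. P (cmod (lam i))}"
  define T where "T = matrix_inv S ** map_matrix cnj S"
  have ST: "S ** T = map_matrix cnj S"
    by (simp add: T_def matrix_mul_assoc matrix_inv_inverse[OF S])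
  have T_restrict: "T *v restrict_vec ?I v = restrict_vec ?I (T *v v)" for v
    by (rule block_diagonal_mult_restrict_vec)
      (use conj_eigenbasis_change_entry_eq_0[OF S AS] in \<open>force simp: T_def\<close>)
  have "map_matrix cnj S *v vconj c = cvec x"
    using arg_cong[OF Sc, of vconj] by (simp only: vconj_mult vconj_cvec)
  then have "S *v (T *v vconj c) = S *v c"
    by (simp add: matrix_vector_mul_assoc ST Sc)
  then have Tc: "T *v vconj c = c"
    using inj_matrix_vector_mult[OF S] by (auto dest: injD)
  have "vconj (S *v restrict_vec ?I c) = S *v (T *v restrict_vec ?I (vconj c))"
    by (simp add: vconj_mult vconj_restrict_vec matrix_vector_mul_assoc ST)
  also have "\<dots> = S *v restrict_vec ?I c"
    by (simp add: T_restrict Tc)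
  finally show ?thesis
    using that by (metis vconj_eq_imp_cvec)
qed

lemma real_eigenspan_decompose:
  assumes S: "invertible S" and AS: "cmat A ** S = S ** cdiag lam"
  obtains a b where "a \<in> real_eigenspan S {i. P (cmod (lam i))}"
    and "b \<in> real_eigenspan S (- {i. P (cmod (lam i))})" and "x = a + b"
proof -
  let ?I = "{i. P (cmod (lam i))}"
  define c where "c = matrix_inv S *v cvec x"
  have Sc: "S *v c = cvec x"
    by (simp add: c_def matrix_vector_mul_assoc matrix_inv_inverse[OF S])
  obtain a where a: "cvec a = S *v restrict_vec ?I c"
    using eigencoordinates_restrict_real[OF S AS Sc] .
  show ?thesis
  proof
    show "a \<in> real_eigenspan S ?I"
      unfolding real_eigenspan_def using a by (intro CollectI exI[of _ "restrict_vec ?I c"]) simp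
    have "cvec (x - a) = S *v restrict_vec (- ?I) c"
      by (simp only: cvec_diff Sc[symmetric] a matrix_vector_mult_diff_distrib[symmetric]
          diff_restrict_vec)
    then show "x - a \<in> real_eigenspan S (- ?I)"
      unfolding real_eigenspan_def by (intro CollectI exI[of _ "restrict_vec (- ?I) c"]) simp
  qed simp
qed

lemma spectral_assumption_E_u_invariant:
  "spectral_assumption A S lam \<Longrightarrow> x \<in> E_u S lam \<Longrightarrow> A *v x \<in> E_u S lam"
  unfolding spectral_assumption_def E_u_eq_real_eigenspan by (blast intro: real_eigenspan_invariant)

lemma spectral_assumption_E_s_invariant:
  "spectral_assumption A S lam \<Longrightarrow> x \<in> E_s S lam \<Longrightarrow> A *v x \<in> E_s S lam"
  unfolding spectral_assumption_def E_s_eq_real_eigenspan by (blast intro: real_eigenspan_invariant)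

lemma spectral_assumption_block_cols_invertible:
  assumes spec: "spectral_assumption A S lam"
    and P: "orthonormal_basis_matrix P (E_u S lam)" and Q: "orthonormal_basis_matrix Q (E_s S lam)"
  shows "invertible (block_cols P Q)"
proof (rule block_cols_invertible[OF P Q])
  have S: "invertible S" and AS: "cmat A ** S = S ** cdiag lam" and "\<And>i. cmod (lam i) \<noteq> 1"
    using spec by (auto simp: spectral_assumption_def)
  then have stable: "- {i. 1 < cmod (lam i)} = {i. cmod (lam i) < 1}"
    by (auto simp: not_less order_le_less)
  show "x = 0" if "x \<in> E_u S lam" and "x \<in> E_s S lam" for x
    by (rule real_eigenspan_disjoint[OF S _ that[unfolded E_u_eq_real_eigenspan E_s_eq_real_eigenspan]])
      auto
  show "\<exists>a\<in>E_u S lam. \<exists>b\<in>E_s S lam. y = a + b" for y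
    using real_eigenspan_decompose[OF S AS, of "\<lambda>r. 1 < r" y]
    unfolding E_u_eq_real_eigenspan E_s_eq_real_eigenspan stable by blast
qed

locale complementary_frames =
  fixes P1 :: "real^'k^'n" and P2 :: "real^'m^'n" and Q2 :: "real^'m^'n" and V :: "(real^'n) set"
  assumes P1: "orthonormal_basis_matrix P1 V"
    and P2: "orthonormal_basis_matrix P2 (orthogonal_comp V)"
    and Q2: "transpose Q2 ** Q2 = mat 1"
    and invertible_block: "invertible (block_cols P1 Q2)"
begin

abbreviation R :: "real^'n^('k + 'm)" where
  "R \<equiv> matrix_inv (block_cols P1 Q2)"

lemma R_inverse: "block_cols P1 Q2 ** R = mat 1" "R ** block_cols P1 Q2 = mat 1"
  using matrix_inv_inverse[OF invertible_block] by simp_all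

lemma Q2_orthonormal: "orthonormal_basis_matrix Q2 (range ((*v) Q2))"
  using Q2 by (simp add: orthonormal_basis_matrix_def)

lemma coordinates_decompose: "P1 *v (R1 R *v y) + Q2 *v (R2 R *v y) = y"
  by (metis R_inverse(1) block_cols_mult_vec_join vec_join_R1_R2 matrix_vector_mul_assoc
      matrix_vector_mul_lid)

lemma
  shows R1_coordinates: "R1 R *v (P1 *v a + Q2 *v b) = a"
    and R2_coordinates: "R2 R *v (P1 *v a + Q2 *v b) = b"
proof -
  have "R *v (P1 *v a + Q2 *v b) = vec_join a b"
    by (metis R_inverse(2) block_cols_mult_vec_join matrix_vector_mul_assoc matrix_vector_mul_lid)
  then show "R1 R *v (P1 *v a + Q2 *v b) = a" and "R2 R *v (P1 *v a + Q2 *v b) = b"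
    by (rule R1_R2_vec_join)+
qed

lemma R2_bound: "sigma_min (transpose P2 ** Q2) * norm (R2 R *v y) \<le> norm y"
proof -
  have "transpose P2 *v y = transpose P2 *v (P1 *v (R1 R *v y)) + transpose P2 *v (Q2 *v (R2 R *v y))"
    by (metis coordinates_decompose matrix_vector_right_distrib)
  also have "transpose P2 *v (P1 *v (R1 R *v y)) = 0"
    using orthonormal_basis_matrix_orthogonal_comp[OF P2] orthonormal_basis_matrix_range[OF P1] by blast
  finally have "transpose P2 *v y = (transpose P2 ** Q2) *v (R2 R *v y)"
    by (simp add: matrix_vector_mul_assoc[symmetric])
  then show ?thesis
    using sigma_min_mult_norm_le[of "transpose P2 ** Q2" "R2 R *v y"]
      orthonormal_basis_matrix_transpose_norm_le[OF P2, of y] by simp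
qed

lemma transpose_P1_Q2_bound:
  "(norm (transpose P1 *v (Q2 *v v)))\<^sup>2 \<le> (1 - (sigma_min (transpose P2 ** Q2))\<^sup>2) * (norm v)\<^sup>2"
proof -
  let ?\<sigma> = "sigma_min (transpose P2 ** Q2)"
  have "(?\<sigma> * norm v)\<^sup>2 \<le> (norm (transpose P2 *v (Q2 *v v)))\<^sup>2"
    using sigma_min_mult_norm_le[of "transpose P2 ** Q2" v] sigma_min_nonneg[of "transpose P2 ** Q2"]
    by (simp add: matrix_vector_mul_assoc power_mono)
  moreover have "(norm (transpose P1 *v (Q2 *v v)))\<^sup>2 + (norm (transpose P2 *v (Q2 *v v)))\<^sup>2
      = (norm v)\<^sup>2"
    using orthonormal_basis_matrix_Pythagoras[OF P1 P2, of "Q2 *v v"]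
    by (simp add: orthonormal_basis_matrix_norm[OF Q2_orthonormal])
  moreover have "(1 - ?\<sigma>\<^sup>2) * (norm v)\<^sup>2 = (norm v)\<^sup>2 - (?\<sigma> * norm v)\<^sup>2"
    by (simp add: power_mult_distrib left_diff_distrib)
  ultimately show ?thesis by linarith
qed

lemma R1_bound: "norm (R1 R *v y) \<le> norm y + norm (transpose P1 *v (Q2 *v (R2 R *v y)))"
proof -
  have "transpose P1 *v y = transpose P1 *v (P1 *v (R1 R *v y) + Q2 *v (R2 R *v y))"
    by (simp only: coordinates_decompose)
  also have "\<dots> = R1 R *v y + transpose P1 *v (Q2 *v (R2 R *v y))"
    by (simp only: matrix_vector_right_distrib orthonormal_basis_matrix_transpose_mult[OF P1])
  finally have "norm (R1 R *v y)
      = norm (transpose P1 *v y - transpose P1 *v (Q2 *v (R2 R *v y)))"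
    by simp
  also have "\<dots> \<le> norm (transpose P1 *v y) + norm (transpose P1 *v (Q2 *v (R2 R *v y)))"
    by (rule norm_triangle_ineq4)
  finally show ?thesis
    using orthonormal_basis_matrix_transpose_norm_le[OF P1, of y] by linarith
qed

lemma R_mult_invariant:
  assumes A_V: "\<And>x. x \<in> V \<Longrightarrow> A *v x \<in> V"
    and A_Q2: "\<And>x. x \<in> range ((*v) Q2) \<Longrightarrow> A *v x \<in> range ((*v) Q2)"
  shows "R1 R *v (A *v y) = (transpose P1 ** A ** P1) *v (R1 R *v y)"
    and "R2 R *v (A *v y) = R2 R *v (A *v (Q2 *v (R2 R *v y)))"
proof -
  have "A *v (P1 *v (R1 R *v y)) \<in> V"
    using A_V orthonormal_basis_matrix_range[OF P1] by blast
  then obtain a where a: "A *v (P1 *v (R1 R *v y)) = P1 *v a"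
    using orthonormal_basis_matrix_range[OF P1] by blast
  obtain b where b: "A *v (Q2 *v (R2 R *v y)) = Q2 *v b"
    using A_Q2 by blast
  have "A *v y = P1 *v a + Q2 *v b"
    by (metis a b coordinates_decompose matrix_vector_right_distrib)
  then have "R1 R *v (A *v y) = a" and "R2 R *v (A *v y) = b"
    by (simp_all add: R1_coordinates R2_coordinates)
  moreover have "a = transpose P1 *v (A *v (P1 *v (R1 R *v y)))"
    by (simp add: a orthonormal_basis_matrix_transpose_mult[OF P1])
  then have "a = (transpose P1 ** A ** P1) *v (R1 R *v y)"
    by (simp add: matrix_vector_mul_assoc matrix_mul_assoc)
  moreover have "R2 R *v (A *v (Q2 *v (R2 R *v y))) = b"
    using R2_coordinates[of 0 b] by (simp add: b)
  ultimately show "R1 R *v (A *v y) = (transpose P1 ** A ** P1) *v (R1 R *v y)"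
    and "R2 R *v (A *v y) = R2 R *v (A *v (Q2 *v (R2 R *v y)))" by simp_all
qed

lemma norm_le_coordinates:
  "norm y \<le> norm (R1 R *v y) + norm (R2 R *v y)"
  "norm (R1 R *v y) \<le> norm y + norm (R2 R *v y)"
proof -
  let ?p = "P1 *v (R1 R *v y)" and ?q = "Q2 *v (R2 R *v y)"
  have norms: "norm ?p = norm (R1 R *v y)" "norm ?q = norm (R2 R *v y)"
    by (simp_all add: orthonormal_basis_matrix_norm[OF P1] orthonormal_basis_matrix_norm[OF Q2_orthonormal])
  show "norm y \<le> norm (R1 R *v y) + norm (R2 R *v y)"
    using norm_triangle_ineq[of ?p ?q] by (simp add: coordinates_decompose norms)
  have "?p = y - ?q" using coordinates_decompose[of y] by (simp add: eq_diff_eq)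
  then show "norm (R1 R *v y) \<le> norm y + norm (R2 R *v y)"
    using norm_triangle_ineq4[of y ?q] by (simp add: norms[symmetric])
qed

end

locale xi_close_frames = complementary_frames +
  fixes \<xi> :: real
  assumes xi: "0 < \<xi>" "\<xi> < 1"
    and close: "sigma_min (transpose P2 ** Q2) > 1 - \<xi>"
begin

lemma R2_bound_close:
  shows "(1 - \<xi>) * norm (R2 R *v y) \<le> norm y"
  using mult_right_mono[OF less_imp_le[OF close] norm_ge_zero[of "R2 R *v y"]] R2_bound[of y]
  by linarith

lemma R1_bound_close:
  shows "norm (R1 R *v y) \<le> (1 + sqrt (2 * \<xi>) / (1 - \<xi>)) * norm y"
proof -
  define r where "r = R2 R *v y"
  have "(1 - \<xi>)\<^sup>2 \<le> (sigma_min (transpose P2 ** Q2))\<^sup>2"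
    using close xi(2) by (intro power_mono) auto
  moreover have "1 - (1 - \<xi>)\<^sup>2 \<le> 2 * \<xi>"
    by (simp add: power2_eq_square algebra_simps)
  ultimately have "1 - (sigma_min (transpose P2 ** Q2))\<^sup>2 \<le> 2 * \<xi>"
    by linarith
  then have "(norm (transpose P1 *v (Q2 *v r)))\<^sup>2 \<le> (sqrt (2 * \<xi>) * norm r)\<^sup>2"
    using transpose_P1_Q2_bound[of r] xi(1)
    by (simp add: power_mult_distrib) (meson mult_right_mono order_trans zero_le_power2)
  then have "norm (transpose P1 *v (Q2 *v r)) \<le> sqrt (2 * \<xi>) * norm r"
    by (rule power2_le_imp_le) (use xi(1) in simp)
  also have "\<dots> \<le> sqrt (2 * \<xi>) * (norm y / (1 - \<xi>))"
    using R2_bound_close[of y] xi(1) xi(2)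
    by (intro mult_left_mono) (simp_all add: r_def pos_le_divide_eq mult.commute)
  finally show ?thesis
    using R1_bound[of y] by (simp add: r_def algebra_simps)
qed

lemma R1_step:
  assumes "\<And>x. x \<in> V \<Longrightarrow> A *v x \<in> V"
    and "\<And>x. x \<in> range ((*v) Q2) \<Longrightarrow> A *v x \<in> range ((*v) Q2)"
  shows "sigma_min (transpose P1 ** A ** P1) * norm (R1 R *v x)
      - (1 + sqrt (2 * \<xi>) / (1 - \<xi>)) * opnorm B * norm u \<le> norm (R1 R *v (A *v x + B *v u))"
proof -
  let ?c = "1 + sqrt (2 * \<xi>) / (1 - \<xi>)" and ?M1 = "transpose P1 ** A ** P1"
  have "?c \<ge> 0" using xi by simp
  then have "norm (R1 R *v (B *v u)) \<le> ?c * opnorm B * norm u"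
    using R1_bound_close[of "B *v u"] mult_left_mono[OF norm_mult_le_opnorm[of B u], of ?c]
    by (simp add: mult.assoc)
  moreover have "R1 R *v (A *v x + B *v u) = ?M1 *v (R1 R *v x) + R1 R *v (B *v u)"
    by (simp add: matrix_vector_right_distrib R_mult_invariant(1)[OF assms])
  ultimately show ?thesis
    unfolding \<open>R1 R *v (A *v x + B *v u) = _\<close> using sigma_min_mult_norm_le[of ?M1 "R1 R *v x"]
      norm_diff_ineq[of "?M1 *v (R1 R *v x)" "R1 R *v (B *v u)"]
    by linarith
qed

lemma R2_step:
  assumes "\<And>x. x \<in> V \<Longrightarrow> A *v x \<in> V"
    and "\<And>x. x \<in> range ((*v) Q2) \<Longrightarrow> A *v x \<in> range ((*v) Q2)"
  shows "(1 - \<xi>) * norm (R2 R *v (A *v x + B *v u))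
      \<le> opnorm A * norm (R2 R *v x) + opnorm B * norm u"
proof -
  let ?r = "R2 R *v x"
  have "(1 - \<xi>) * norm (R2 R *v (A *v x + B *v u))
      = (1 - \<xi>) * norm (R2 R *v (A *v (Q2 *v ?r)) + R2 R *v (B *v u))"
    unfolding matrix_vector_right_distrib by (subst R_mult_invariant(2)[OF assms]) simp_all
  also have "\<dots> \<le> (1 - \<xi>) * norm (R2 R *v (A *v (Q2 *v ?r))) + (1 - \<xi>) * norm (R2 R *v (B *v u))"
    unfolding distrib_left[symmetric] using xi by (intro mult_left_mono norm_triangle_ineq) simp
  also have "\<dots> \<le> norm (A *v (Q2 *v ?r)) + norm (B *v u)"
    by (intro add_mono R2_bound_close)
  also have "\<dots> \<le> opnorm A * norm ?r + opnorm B * norm u"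
    by (intro add_mono norm_mult_le_opnorm[of A "Q2 *v ?r",
          unfolded orthonormal_basis_matrix_norm[OF Q2_orthonormal]] norm_mult_le_opnorm)
  finally show ?thesis .
qed

end

lemma cone_ratio_bounds:
  fixes \<gamma> X a1 a2 :: real
  assumes "1 < \<gamma>" "\<gamma> * a2 < a1" "0 \<le> a2" "X \<le> a1 + a2" "a1 \<le> X + a2"
  shows "\<gamma> / (\<gamma> + 1) * X \<le> a1" and "a2 \<le> X / (\<gamma> - 1)" and "0 < X"
proof -
  have "\<gamma> * X \<le> (\<gamma> + 1) * a1"
    using assms mult_left_mono[OF assms(4), of \<gamma>] by (simp add: algebra_simps)
  then show "\<gamma> / (\<gamma> + 1) * X \<le> a1"
    using assms(1) by (simp add: field_simps)
  show "a2 \<le> X / (\<gamma> - 1)"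
    using assms by (simp add: field_simps)
  have "a2 \<le> \<gamma> * a2" using mult_right_mono[of 1 \<gamma> a2] assms(1,3) by simp
  then show "0 < X" using assms by linarith
qed

lemma cone_condition_step:
  fixes \<xi> \<gamma> \<gamma>p \<alpha> \<sigma> nA nB c X U a1 a2 b1 b2 :: real
  assumes "0 < \<xi>" "\<xi> < 1" "0 < \<gamma>" "1 < \<gamma>p" "0 \<le> \<sigma>" "0 \<le> nA" "0 \<le> nB" "0 \<le> c"
    and cone: "\<gamma>p * a2 < a1" "0 \<le> a2"
    and triangle: "X \<le> a1 + a2" "a1 \<le> X + a2"
    and U: "U \<le> \<alpha> * X"
    and b1: "\<sigma> * a1 - (1 + c) * nB * U \<le> b1"
    and b2: "(1 - \<xi>) * b2 \<le> nA * a2 + nB * U"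
    and \<alpha>: "\<alpha> * ((1 + c + \<gamma> / (1 - \<xi>)) * nB)
      < \<gamma>p / (\<gamma>p + 1) * \<sigma> - \<gamma> / (\<gamma>p - 1) * (1 / (1 - \<xi>)) * nA"
  shows "\<gamma> * b2 < b1"
proof -
  define d where "d = 1 - \<xi>"
  define K where "K = (1 + c + \<gamma> / d) * nB"
  have d: "0 < d" using assms(2) by (simp add: d_def)
  have K: "0 \<le> K" using d assms by (simp add: K_def)
  note X = cone_ratio_bounds[OF assms(4) cone triangle]
  have "\<sigma> * (\<gamma>p / (\<gamma>p + 1) * X) \<le> \<sigma> * a1"
    using X(1) assms(5) by (rule mult_left_mono)
  moreover have "\<gamma> / d * nA * a2 \<le> \<gamma> / d * nA * (X / (\<gamma>p - 1))"
    using X(2) assms d by (intro mult_left_mono) auto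
  moreover have "K * U \<le> K * (\<alpha> * X)"
    using U K by (rule mult_left_mono)
  moreover have "\<gamma> * b2 \<le> \<gamma> / d * (nA * a2 + nB * U)"
    using mult_left_mono[OF b2[folded d_def], of "\<gamma> / d"] d assms(3) by simp
  moreover have "0 < X * (\<gamma>p / (\<gamma>p + 1) * \<sigma> - \<gamma> / (\<gamma>p - 1) * (1 / d) * nA - \<alpha> * K)"
    using X(3) \<alpha> by (simp add: d_def K_def)
  moreover have "X * (\<gamma>p / (\<gamma>p + 1) * \<sigma> - \<gamma> / (\<gamma>p - 1) * (1 / d) * nA - \<alpha> * K)
      = \<sigma> * (\<gamma>p / (\<gamma>p + 1) * X) - \<gamma> / d * nA * (X / (\<gamma>p - 1)) - K * (\<alpha> * X)"
    by (simp add: algebra_simps)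
  moreover have "\<gamma> / d * (nA * a2 + nB * U) = \<gamma> / d * nA * a2 + K * U - (1 + c) * nB * U"
    by (simp add: K_def algebra_simps)
  ultimately show ?thesis using b1 by linarith
qed

theorem mainTheorem11:
  fixes A :: "real^'n^'n" and S :: "complex^'n^'n" and lam :: "'n \<Rightarrow> complex"
    and P1 :: "real^'k^'n" and P2 :: "real^'m^'n" and Q2 :: "real^'m^'n"
    and B :: "real^'k^'n"
    and \<xi> \<gamma> \<gamma>p \<alpha> :: real and x :: "real^'n" and u :: "real^'k"
  assumes spec: "spectral_assumption A S lam"
    and P1: "orthonormal_basis_matrix P1 (E_u S lam)"
    and P2: "orthonormal_basis_matrix P2 (orthogonal_comp (E_u S lam))"
    and Q2: "orthonormal_basis_matrix Q2 (E_s S lam)"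
    and xi: "0 < \<xi>" "\<xi> < 1"
    and close: "sigma_min (transpose P2 ** Q2) > 1 - \<xi>"
    and gam: "\<gamma> > 0" and gamp: "\<gamma>p > 1"
    and hx: "norm (R1 (matrix_inv (block_cols P1 Q2)) *v x)
               > \<gamma>p * norm (R2 (matrix_inv (block_cols P1 Q2)) *v x)"
    and hu: "norm u \<le> \<alpha> * norm x"
    and halpha: "\<alpha> * ((1 + sqrt (2 * \<xi>) / (1 - \<xi>) + \<gamma> / (1 - \<xi>)) * opnorm B)
       < \<gamma>p / (\<gamma>p + 1) * sigma_min (transpose P1 ** A ** P1)
         - \<gamma> / (\<gamma>p - 1) * (1 / (1 - \<xi>)) * opnorm A"
  shows "norm (R1 (matrix_inv (block_cols P1 Q2)) *v (A *v x + B *v u))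
           > \<gamma> * norm (R2 (matrix_inv (block_cols P1 Q2)) *v (A *v x + B *v u))"
proof -
  have E_u: "\<And>y. y \<in> E_u S lam \<Longrightarrow> A *v y \<in> E_u S lam"
    by (rule spectral_assumption_E_u_invariant[OF spec])
  have "range ((*v) Q2) = E_s S lam"
    using Q2 unfolding orthonormal_basis_matrix_def by (rule conjunct2)
  then have E_s: "\<And>y. y \<in> range ((*v) Q2) \<Longrightarrow> A *v y \<in> range ((*v) Q2)"
    using spectral_assumption_E_s_invariant[OF spec] by simp
  interpret xi_close_frames P1 P2 Q2 "E_u S lam" \<xi>
  proof
    show "transpose Q2 ** Q2 = mat 1"
      using Q2 by (simp add: orthonormal_basis_matrix_def)
    show "invertible (block_cols P1 Q2)"
      by (rule spectral_assumption_block_cols_invertible[OF spec P1 Q2])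
  qed (use P1 P2 xi close in auto)
  have "0 \<le> sqrt (2 * \<xi>) / (1 - \<xi>)"
    using xi by simp
  then show ?thesis
    by (rule cone_condition_step[OF xi gam gamp sigma_min_nonneg opnorm_nonneg opnorm_nonneg _ hx
          norm_ge_zero norm_le_coordinates hu R1_step[OF E_u E_s] R2_step[OF E_u E_s] halpha])
qed

end
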